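(* Let $\mathcal{A}$ be a Desargues affine plane, let $\ell_1=\ell^{OI}$ and $\ell_2$ be lines of $\mathcal{A}$ ($O\neq I$), and let $P_P:\ell_1\to\ell_2$ be a parallel projection. Equip $\ell_1$ with the skew field structure with zero $O$ and unit $I$, and $\ell_2$ with the skew field structure with zero $P_P(O)$ and unit $P_P(I)$. Then for all $A,B\in\ell_1$ with $B\neq O$, \[ P_P(r(A:B))=r(P_P(A):P_P(B)), \] where the ratio on the left is computed in $\ell_1$ and the ratio on the right in $\ell_2$.
   Context: A Desargues affine plane is an incidence structure of points and lines in which any two distinct points lie on exactly one line, through a point not on a line $\ell$ there is exactly one line disjoint from $\ell$ (Playfair), there exist three non-collinear points, and Desargues' axiom holds: if $A,B,C,A',B',C'$ are points such that the pairwise distinct lines $AA',BB',CC'$ are either all parallel or all pass through one point, and $AB\parallel A'B'$, $BC\parallel B'C'$ (with $AB\neq A'B'$, $BC\neq B'C'$, $A\ne C$, $A'\ne C'$), then $AC\parallel A'C'$. Skew field on a line: for distinct points $O,I$ and points $A,B$ on the line $\ell^{OI}$, addition is defined by: choose a point $B_1\notin\ell^{OI}$; let $P_1$ be the intersection of the line through $B_1$ parallel to $\ell^{OI}$ with the line through $A$ parallel to $OB_1$; then $A+B$ is the intersection of $\ell^{OI}$ with the line through $P_1$ parallel to $BB_1$. Multiplication is defined by: choose $B_1\notin\ell^{OI}$; let $P_1$ be the intersection of the line through $A$ parallel to $IB_1$ with the line $OB_1$; then $A\cdot B$ is the intersection of $\ell^{OI}$ with the line through $P_1$ parallel to $BB_1$.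 These operations do not depend on the choice of $B_1$ and make $(\ell^{OI},+,\cdot)$ a skew field with zero $O$ and unit $I$; the same construction applies to any line with any chosen pair of distinct points as zero and unit. $X^{-1}$ denotes the multiplicative inverse. Ratio of two points on a line with chosen zero $O$: $r(A:B)=B^{-1}A$ for $B\neq O$. A parallel projection between lines $\ell_1,\ell_2$ is a map $P_P:\ell_1\to\ell_2$ such that for all $A,B\in\ell_1$ the lines $A\,P_P(A)$ and $B\,P_P(B)$ are parallel (it is a bijection). *)

theory Defs
  imports Main
begin

text \<open>Incidence structure: points are the elements of the type 'p, lines are
  the members of a set L of point sets; incidence is membership.\<close>

definition par :: "'p set \<Rightarrow> 'p set \<Rightarrow> bool" where
  "par l m \<longleftrightarrow> l = m \<or> l \<inter> m = {}"

definition ln :: "'p set set \<Rightarrow> 'p \<Rightarrow> 'p \<Rightarrow> 'p set" where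
  "ln L A B = (THE l. l \<in> L \<and> A \<in> l \<and> B \<in> l)"

definition parl :: "'p set set \<Rightarrow> 'p \<Rightarrow> 'p set \<Rightarrow> 'p set" where
  "parl L P l = (THE m. m \<in> L \<and> P \<in> m \<and> par m l)"

definition meet :: "'p set \<Rightarrow> 'p set \<Rightarrow> 'p" where
  "meet l m = (THE X. X \<in> l \<and> X \<in> m)"

definition collinear :: "'p set set \<Rightarrow> 'p \<Rightarrow> 'p \<Rightarrow> 'p \<Rightarrow> bool" where
  "collinear L A B C \<longleftrightarrow> (\<exists>l\<in>L. A \<in> l \<and> B \<in> l \<and> C \<in> l)"

definition affine_plane :: "'p set set \<Rightarrow> bool" where
  "affine_plane L \<longleftrightarrow>
     (\<forall>A B. A \<noteq> B \<longrightarrow> (\<exists>!l. l \<in> L \<and> A \<in> l \<and> B \<in> l)) \<and>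
     (\<forall>l\<in>L. \<forall>P. P \<notin> l \<longrightarrow> (\<exists>!m. m \<in> L \<and> P \<in> m \<and> m \<inter> l = {})) \<and>
     (\<exists>A B C. \<not> collinear L A B C)"

definition desargues :: "'p set set \<Rightarrow> bool" where
  "desargues L \<longleftrightarrow>
     (\<forall>A B C A' B' C'.
        A \<noteq> A' \<and> B \<noteq> B' \<and> C \<noteq> C' \<and>
        A \<noteq> B \<and> A' \<noteq> B' \<and> B \<noteq> C \<and> B' \<noteq> C' \<and> A \<noteq> C \<and> A' \<noteq> C' \<and>
        ln L A A' \<noteq> ln L B B' \<and> ln L B B' \<noteq> ln L C C' \<and> ln L A A' \<noteq> ln L C C' \<and>
        ((par (ln L A A') (ln L B B') \<and> par (ln L B B') (ln L C C') \<and>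
          par (ln L A A') (ln L C C')) \<or>
         (\<exists>P. P \<in> ln L A A' \<and> P \<in> ln L B B' \<and> P \<in> ln L C C')) \<and>
        par (ln L A B) (ln L A' B') \<and> ln L A B \<noteq> ln L A' B' \<and>
        par (ln L B C) (ln L B' C') \<and> ln L B C \<noteq> ln L B' C'
      \<longrightarrow> par (ln L A C) (ln L A' C'))"

definition desargues_affine_plane :: "'p set set \<Rightarrow> bool" where
  "desargues_affine_plane L \<longleftrightarrow> affine_plane L \<and> desargues L"

text \<open>Addition on the line OI with zero O (the auxiliary point B1 is any
  point off the line; the result does not depend on the choice).\<close>
definition add_line :: "'p set set \<Rightarrow> 'p \<Rightarrow> 'p \<Rightarrow> 'p \<Rightarrow> 'p \<Rightarrow> 'p" where
  "add_line L O1 I1 A B =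
     (let l = ln L O1 I1;
          B1 = (SOME B1. B1 \<notin> l);
          P1 = meet (parl L B1 l) (parl L A (ln L O1 B1))
      in meet l (parl L P1 (ln L B B1)))"

definition mul_line :: "'p set set \<Rightarrow> 'p \<Rightarrow> 'p \<Rightarrow> 'p \<Rightarrow> 'p \<Rightarrow> 'p" where
  "mul_line L O1 I1 A B =
     (let l = ln L O1 I1;
          B1 = (SOME B1. B1 \<notin> l);
          P1 = meet (parl L A (ln L I1 B1)) (ln L O1 B1)
      in meet l (parl L P1 (ln L B B1)))"

definition inv_line :: "'p set set \<Rightarrow> 'p \<Rightarrow> 'p \<Rightarrow> 'p \<Rightarrow> 'p" where
  "inv_line L O1 I1 X =
     (THE Y. Y \<in> ln L O1 I1 \<and> mul_line L O1 I1 X Y = I1 \<and> mul_line L O1 I1 Y X = I1)"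

definition ratio :: "'p set set \<Rightarrow> 'p \<Rightarrow> 'p \<Rightarrow> 'p \<Rightarrow> 'p \<Rightarrow> 'p" where
  "ratio L O1 I1 A B = mul_line L O1 I1 (inv_line L O1 I1 B) A"

definition parallel_projection ::
  "'p set set \<Rightarrow> 'p set \<Rightarrow> 'p set \<Rightarrow> ('p \<Rightarrow> 'p) \<Rightarrow> bool" where
  "parallel_projection L l1 l2 P \<longleftrightarrow>
     l1 \<in> L \<and> l2 \<in> L \<and> bij_betw P l1 l2 \<and>
     (\<exists>d\<in>L. \<not> par d l1 \<and>
        (\<forall>A\<in>l1. P A \<noteq> A \<longrightarrow> par (ln L A (P A)) d))"

end

(*
  Let pi be the projection onto l2 along a direction D.  As r(A:B) = B^-1 A, it suffices that
  pi is multiplicative, pi (X Y) = pi X * pi Y with zero pi O1 and unit pi I1 on l2; then it also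
  maps inverses to inverses.  The product X Y on a line does not depend on the auxiliary point
  off the line (Desargues with centre O1), so on each line we may pick auxiliary points that
  make the two constructions correspond.  If l2 passes through O1, taking pi Y on l1 and I1 on
  l2 makes the two constructions share their points.  If l2 is parallel to l1, pi is the
  translation taking O1 to pi O1, which preserves directions (Desargues for parallel lines) and
  hence carries the construction with auxiliary point pi I1 onto the one with its translate.
  In general pi factors through the parallel to l1 through pi O1.
*)

theory Submission
  imports Defs
begin

section \<open>Affine planes\<close>

lemma par_refl [simp]: "par l l"
  by (simp add: par_def)

lemma par_sym: "par l m \<Longrightarrow> par m l"
  by (auto simp: par_def)

lemma par_disjoint: "par l m \<Longrightarrow> l \<noteq> m \<Longrightarrow> l \<inter> m = {}"
  by (simp add: par_def)

lemma not_par_if_common_point: "l \<noteq> m \<Longrightarrow> P \<in> l \<Longrightarrow> P \<in> m \<Longrightarrow> \<not> par l m"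
  by (auto simp: par_def)

locale desarguesian_plane =
  fixes L :: "'p set set"
  assumes desarguesian: "desargues_affine_plane L"
begin

lemma is_affine_plane: "affine_plane L"
  and has_desargues: "desargues L"
  using desarguesian by (simp_all add: desargues_affine_plane_def)

lemma line_through_two_points: "A \<noteq> B \<Longrightarrow> \<exists>!l. l \<in> L \<and> A \<in> l \<and> B \<in> l"
  using is_affine_plane unfolding affine_plane_def by (elim conjE allE impE)

lemma playfair:
  assumes "l \<in> L" "P \<notin> l" shows "\<exists>!m. m \<in> L \<and> P \<in> m \<and> m \<inter> l = {}"
proof -
  have "\<forall>l\<in>L. \<forall>P. P \<notin> l \<longrightarrow> (\<exists>!m. m \<in> L \<and> P \<in> m \<and> m \<inter> l = {})"
    using is_affine_plane unfolding affine_plane_def by (elim conjE)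
  with assms show ?thesis by blast
qed

lemma noncollinear_triple: "\<exists>A B C. \<not> collinear L A B C"
  using is_affine_plane unfolding affine_plane_def by (elim conjE)

lemma ln_props: "A \<noteq> B \<Longrightarrow> ln L A B \<in> L \<and> A \<in> ln L A B \<and> B \<in> ln L A B"
  unfolding ln_def by (rule theI') (rule line_through_two_points)

lemma ln_in_L [simp]: "A \<noteq> B \<Longrightarrow> ln L A B \<in> L"
  and ln_left [simp]: "A \<noteq> B \<Longrightarrow> A \<in> ln L A B"
  and ln_right [simp]: "A \<noteq> B \<Longrightarrow> B \<in> ln L A B"
  using ln_props by auto

lemma ln_sym: "ln L A B = ln L B A"
  unfolding ln_def by (simp add: conj_ac)

lemma lines_eqI: "l \<in> L \<Longrightarrow> m \<in> L \<Longrightarrow> A \<in> l \<Longrightarrow> B \<in> l \<Longrightarrow> A \<in> m \<Longrightarrow> B \<in> m \<Longrightarrow> A \<noteq> B \<Longrightarrow> l = m"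
  using line_through_two_points by blast

lemma common_point_unique:
  "l \<in> L \<Longrightarrow> m \<in> L \<Longrightarrow> l \<noteq> m \<Longrightarrow> X \<in> l \<Longrightarrow> X \<in> m \<Longrightarrow> Y \<in> l \<Longrightarrow> Y \<in> m \<Longrightarrow> X = Y"
  using lines_eqI by blast

lemma ln_unique: "l \<in> L \<Longrightarrow> A \<in> l \<Longrightarrow> B \<in> l \<Longrightarrow> A \<noteq> B \<Longrightarrow> ln L A B = l"
  using lines_eqI ln_props by blast

lemma ln_ne_if_off: "l \<in> L \<Longrightarrow> Y \<in> l \<Longrightarrow> Q \<notin> l \<Longrightarrow> ln L Y Q \<noteq> l"
  by (metis ln_right)

lemma not_par_ln_if_off: "l \<in> L \<Longrightarrow> Y \<in> l \<Longrightarrow> Q \<notin> l \<Longrightarrow> \<not> par l (ln L Y Q)"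
  by (metis ln_left ln_right not_par_if_common_point)

lemma par_trans: "l \<in> L \<Longrightarrow> m \<in> L \<Longrightarrow> n \<in> L \<Longrightarrow> par l m \<Longrightarrow> par m n \<Longrightarrow> par l n"
proof (unfold par_def, elim disjE)
  assume lmn: "l \<in> L" "m \<in> L" "n \<in> L" and "l \<inter> m = {}" "m \<inter> n = {}"
  show "l = n \<or> l \<inter> n = {}"
  proof (rule disjCI)
    assume "l \<inter> n \<noteq> {}"
    then obtain P where P: "P \<in> l" "P \<in> n" by blast
    with \<open>l \<inter> m = {}\<close> have "P \<notin> m" by blast
    from playfair[OF \<open>m \<in> L\<close> this] lmn P \<open>l \<inter> m = {}\<close> \<open>m \<inter> n = {}\<close>
    show "l = n" by (metis inf_commute)
  qed
qed auto

lemma parallel_through_point: "l \<in> L \<Longrightarrow> \<exists>!m. m \<in> L \<and> P \<in> m \<and> par m l"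
proof (cases "P \<in> l")
  case True
  then show "l \<in> L \<Longrightarrow> ?thesis"
    by (intro ex1I[of _ l]) (auto simp: par_def)
next
  case False
  assume "l \<in> L"
  with playfair[OF this False] show ?thesis
    using False by (auto simp: par_def)
qed

lemma parl_props: "l \<in> L \<Longrightarrow> parl L P l \<in> L \<and> P \<in> parl L P l \<and> par (parl L P l) l"
  unfolding parl_def by (rule theI') (rule parallel_through_point)

lemma parl_in_L [simp]: "l \<in> L \<Longrightarrow> parl L P l \<in> L"
  and parl_through [simp]: "l \<in> L \<Longrightarrow> P \<in> parl L P l"
  and parl_par: "l \<in> L \<Longrightarrow> par (parl L P l) l"
  using parl_props by auto

lemma parl_unique: "l \<in> L \<Longrightarrow> m \<in> L \<Longrightarrow> P \<in> m \<Longrightarrow> par m l \<Longrightarrow> parl L P l = m"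
  using parallel_through_point parl_props by blast

lemma parl_self: "l \<in> L \<Longrightarrow> P \<in> l \<Longrightarrow> parl L P l = l"
  by (rule parl_unique) simp_all

lemma parl_cong:
  assumes "l \<in> L" "m \<in> L" "par l m" shows "parl L P l = parl L P m"
proof -
  have "par (parl L P l) m"
    using par_trans[OF parl_in_L[OF assms(1)] assms(1,2) parl_par[OF assms(1)] assms(3)] .
  with assms show ?thesis by (intro parl_unique[symmetric]) simp_all
qed

lemma parl_parl: "l \<in> L \<Longrightarrow> parl L Q (parl L P l) = parl L Q l"
  by (rule parl_cong) (simp_all add: parl_par)

lemma parl_through_other: "l \<in> L \<Longrightarrow> Q \<in> parl L P l \<Longrightarrow> parl L Q l = parl L P l"
  by (rule parl_unique) (simp_all add: parl_par)

lemma ln_eq_parl: "l \<in> L \<Longrightarrow> C \<in> parl L P l \<Longrightarrow> C \<noteq> P \<Longrightarrow> ln L P C = parl L P l"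
  by (rule ln_unique) simp_all

lemma in_parl_iff: "l \<in> L \<Longrightarrow> C \<noteq> P \<Longrightarrow> C \<in> parl L P l \<longleftrightarrow> par (ln L P C) l"
  by (metis ln_eq_parl ln_in_L ln_left ln_right parl_par parl_unique)

lemma not_par_parl: "l \<in> L \<Longrightarrow> m \<in> L \<Longrightarrow> \<not> par l m \<Longrightarrow> \<not> par (parl L P l) m"
  by (meson par_sym par_trans parl_in_L parl_par)

lemma not_par_parl': "l \<in> L \<Longrightarrow> m \<in> L \<Longrightarrow> \<not> par l m \<Longrightarrow> \<not> par l (parl L P m)"
  by (meson par_sym par_trans parl_in_L parl_par)

lemma meet_props: "l \<in> L \<Longrightarrow> m \<in> L \<Longrightarrow> \<not> par l m \<Longrightarrow> meet l m \<in> l \<and> meet l m \<in> m"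
  unfolding meet_def by (rule theI') (auto simp: par_def dest: common_point_unique)

lemma meet_unique: "l \<in> L \<Longrightarrow> m \<in> L \<Longrightarrow> \<not> par l m \<Longrightarrow> X \<in> l \<Longrightarrow> X \<in> m \<Longrightarrow> meet l m = X"
  by (metis common_point_unique meet_props par_refl)

lemma parl_disjoint: "l \<in> L \<Longrightarrow> P \<notin> l \<Longrightarrow> parl L P l \<inter> l = {}"
  by (metis par_disjoint parl_par parl_through)

lemma point_off_two_lines:
  assumes "l \<in> L" "m \<in> L" "\<not> par l m" "A \<in> l" "A \<notin> m" "B \<in> m" "B \<notin> l"
  shows "\<exists>R. R \<notin> l \<and> R \<notin> m"
proof -
  have "\<not> par (parl L B l) (parl L A m)"
    using assms(1-3) by (intro not_par_parl not_par_parl') simp_all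
  then have "meet (parl L B l) (parl L A m) \<in> parl L B l \<inter> parl L A m"
    using assms(1,2) meet_props by simp
  then show ?thesis
    using parl_disjoint assms by blast
qed

lemma point_off_line: "l \<in> L \<Longrightarrow> \<exists>P. P \<notin> l"
  using noncollinear_triple unfolding collinear_def by blast

section \<open>Desargues configurations\<close>

lemma desargues_lines:
  assumes "a \<in> L" "b \<in> L" "c \<in> L" "a \<noteq> b" "b \<noteq> c" "a \<noteq> c"
    and "(par a b \<and> par b c \<and> par a c) \<or> (\<exists>Z. Z \<in> a \<and> Z \<in> b \<and> Z \<in> c)"
    and "A \<in> a" "A' \<in> a" "B \<in> b" "B' \<in> b" "C \<in> c" "C' \<in> c"
    and "A \<noteq> A'" "B \<noteq> B'" "C \<noteq> C'"
    and "A \<noteq> B" "A' \<noteq> B'" "B \<noteq> C" "B' \<noteq> C'" "A \<noteq> C" "A' \<noteq> C'"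
    and "par (ln L A B) (ln L A' B')" "ln L A B \<noteq> ln L A' B'"
    and "par (ln L B C) (ln L B' C')" "ln L B C \<noteq> ln L B' C'"
  shows "par (ln L A C) (ln L A' C')"
proof (rule has_desargues[unfolded desargues_def, rule_format, of A A' B B' C C'])
  have "ln L A A' = a" "ln L B B' = b" "ln L C C' = c"
    using assms by (simp_all add: ln_unique)
  with assms show "A \<noteq> A' \<and> B \<noteq> B' \<and> C \<noteq> C' \<and>
    A \<noteq> B \<and> A' \<noteq> B' \<and> B \<noteq> C \<and> B' \<noteq> C' \<and> A \<noteq> C \<and> A' \<noteq> C' \<and>
    ln L A A' \<noteq> ln L B B' \<and> ln L B B' \<noteq> ln L C C' \<and> ln L A A' \<noteq> ln L C C' \<and>
    ((par (ln L A A') (ln L B B') \<and> par (ln L B B') (ln L C C') \<and> par (ln L A A') (ln L C C')) \<or>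
     (\<exists>P. P \<in> ln L A A' \<and> P \<in> ln L B B' \<and> P \<in> ln L C C')) \<and>
    par (ln L A B) (ln L A' B') \<and> ln L A B \<noteq> ln L A' B' \<and>
    par (ln L B C) (ln L B' C') \<and> ln L B C \<noteq> ln L B' C'"
    by simp
qed

lemma sides_distinct:
  "a \<in> L \<Longrightarrow> A \<in> a \<Longrightarrow> A' \<in> a \<Longrightarrow> A \<noteq> A' \<Longrightarrow> B \<notin> a \<Longrightarrow> A' \<noteq> B' \<Longrightarrow> ln L A B \<noteq> ln L A' B'"
  by (metis ln_in_L ln_left ln_right ln_unique)

lemma desargues_central:
  assumes lines: "a \<in> L" "b \<in> L" "c \<in> L" "a \<noteq> b" "b \<noteq> c" "a \<noteq> c"
    and centre: "Z \<in> a" "Z \<in> b" "Z \<in> c"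
    and points: "A \<in> a" "A' \<in> a" "B \<in> b" "B' \<in> b" "C \<in> c" "C' \<in> c"
    and pairs: "A \<noteq> A'" "B \<noteq> B'" "C \<noteq> C'"
    and off_centre: "B \<noteq> Z" "B' \<noteq> Z" "C \<noteq> Z" "C' \<noteq> Z"
    and sides: "par (ln L A B) (ln L A' B')" "par (ln L B C) (ln L B' C')"
  shows "par (ln L A C) (ln L A' C')"
proof -
  have ab: "X \<in> a \<Longrightarrow> X \<in> b \<Longrightarrow> X = Z"
    and bc: "X \<in> b \<Longrightarrow> X \<in> c \<Longrightarrow> X = Z"
    and ac: "X \<in> a \<Longrightarrow> X \<in> c \<Longrightarrow> X = Z" for X
    using common_point_unique lines centre by blast+
  have B_off: "B \<notin> a" and C_off: "C \<notin> b"
    using ab bc points off_centre by blast+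
  have distinct: "A \<noteq> B" "A' \<noteq> B'" "B \<noteq> C" "B' \<noteq> C'" "A \<noteq> C" "A' \<noteq> C'"
    using ab bc ac points off_centre by blast+
  have "ln L A B \<noteq> ln L A' B'"
    using sides_distinct[OF lines(1) points(1,2) pairs(1) B_off distinct(2)] .
  moreover have "ln L B C \<noteq> ln L B' C'"
    using sides_distinct[OF lines(2) points(3,4) pairs(2) C_off distinct(4)] .
  ultimately show ?thesis
    using desargues_lines[OF lines _ points pairs distinct sides(1) _ sides(2)] centre by blast
qed

lemma desargues_parallel:
  assumes lines: "a \<in> L" "b \<in> L" "c \<in> L" "a \<noteq> b" "b \<noteq> c" "a \<noteq> c"
    and parallel: "par a b" "par b c"
    and points: "A \<in> a" "A' \<in> a" "B \<in> b" "B' \<in> b" "C \<in> c" "C' \<in> c"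
    and pairs: "A \<noteq> A'" "B \<noteq> B'" "C \<noteq> C'"
    and sides: "par (ln L A B) (ln L A' B')" "par (ln L B C) (ln L B' C')"
  shows "par (ln L A C) (ln L A' C')"
proof -
  have "par a c" using par_trans lines parallel by blast
  then have "a \<inter> b = {}" "b \<inter> c = {}" "a \<inter> c = {}"
    using lines parallel by (simp_all add: par_disjoint)
  then have B_off: "B \<notin> a" and C_off: "C \<notin> b"
    and distinct: "A \<noteq> B" "A' \<noteq> B'" "B \<noteq> C" "B' \<noteq> C'" "A \<noteq> C" "A' \<noteq> C'"
    using points by blast+
  have "ln L A B \<noteq> ln L A' B'"
    using sides_distinct[OF lines(1) points(1,2) pairs(1) B_off distinct(2)] .
  moreover have "ln L B C \<noteq> ln L B' C'"
    using sides_distinct[OF lines(2) points(3,4) pairs(2) C_off distinct(4)] .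
  ultimately show ?thesis
    using desargues_lines[OF lines _ points pairs distinct sides(1) _ sides(2)] parallel \<open>par a c\<close>
    by blast
qed

end

section \<open>Multiplication with an explicit auxiliary point\<close>

text \<open>\<open>lift L O1 I1 Q X\<close> is the image of \<open>X\<close> under the dilation with centre \<open>O1\<close>
  taking \<open>I1\<close> to \<open>Q\<close>.\<close>

definition lift :: "'p set set \<Rightarrow> 'p \<Rightarrow> 'p \<Rightarrow> 'p \<Rightarrow> 'p \<Rightarrow> 'p" where
  "lift L O1 I1 Q X = meet (parl L X (ln L I1 Q)) (ln L O1 Q)"

definition mul_via :: "'p set set \<Rightarrow> 'p \<Rightarrow> 'p \<Rightarrow> 'p \<Rightarrow> 'p \<Rightarrow> 'p \<Rightarrow> 'p" where
  "mul_via L O1 I1 Q X Y = meet (ln L O1 I1) (parl L (lift L O1 I1 Q X) (ln L Y Q))"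

lemma mul_line_eq_mul_via_some:
  "mul_line L O1 I1 X Y = mul_via L O1 I1 (SOME Q. Q \<notin> ln L O1 I1) X Y"
  unfolding mul_line_def mul_via_def lift_def Let_def ..

locale coordinate_line = desarguesian_plane L for L :: "'p set set" +
  fixes O1 I1 :: 'p
  assumes O1_ne_I1: "O1 \<noteq> I1"
begin

abbreviation (input) l where "l \<equiv> ln L O1 I1"

lemma l_in_L: "l \<in> L" and O1_on_l: "O1 \<in> l" and I1_on_l: "I1 \<in> l"
  using O1_ne_I1 by simp_all

end

locale mul_frame = coordinate_line L O1 I1 for L :: "'p set set" and O1 I1 +
  fixes Q :: 'p
  assumes Q_off: "Q \<notin> ln L O1 I1"
begin

lemma Q_ne_O1: "Q \<noteq> O1" and Q_ne_I1: "Q \<noteq> I1" and on_l_ne_Q: "Y \<in> l \<Longrightarrow> Y \<noteq> Q"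
  using Q_off O1_on_l I1_on_l by auto

lemma OQ_in_L: "ln L O1 Q \<in> L" and IQ_in_L: "ln L I1 Q \<in> L" and YQ_in_L: "Y \<in> l \<Longrightarrow> ln L Y Q \<in> L"
  using Q_ne_O1 Q_ne_I1 on_l_ne_Q by (metis ln_in_L)+

lemma OQ_meet_l: "X \<in> l \<Longrightarrow> X \<in> ln L O1 Q \<Longrightarrow> X = O1"
  by (metis common_point_unique OQ_in_L O1_on_l Q_ne_O1 Q_off l_in_L ln_left ln_right)

lemma I1_off_OQ: "I1 \<notin> ln L O1 Q"
  using OQ_meet_l I1_on_l O1_ne_I1 by blast

lemma not_par_IQ_OQ: "\<not> par (ln L I1 Q) (ln L O1 Q)"
  by (metis I1_off_OQ Q_ne_O1 Q_ne_I1 ln_left ln_right ln_sym not_par_if_common_point)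

lemma lift_props: "lift L O1 I1 Q X \<in> parl L X (ln L I1 Q) \<and> lift L O1 I1 Q X \<in> ln L O1 Q"
  unfolding lift_def
  by (rule meet_props) (simp_all add: IQ_in_L OQ_in_L not_par_parl not_par_IQ_OQ)

lemma lift_unique: "P \<in> parl L X (ln L I1 Q) \<Longrightarrow> P \<in> ln L O1 Q \<Longrightarrow> lift L O1 I1 Q X = P"
  unfolding lift_def
  by (rule meet_unique) (simp_all add: IQ_in_L OQ_in_L not_par_parl not_par_IQ_OQ)

lemma lift_zero: "lift L O1 I1 Q O1 = O1"
  by (rule lift_unique) (simp_all add: IQ_in_L Q_ne_O1[symmetric])

lemma lift_one: "lift L O1 I1 Q I1 = Q"
  by (rule lift_unique) (simp_all add: IQ_in_L parl_self Q_ne_O1[symmetric] Q_ne_I1[symmetric])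

lemma lift_off_l:
  assumes "X \<in> l" "X \<noteq> O1" shows "lift L O1 I1 Q X \<notin> l"
proof
  assume "lift L O1 I1 Q X \<in> l"
  then have "lift L O1 I1 Q X = O1" using OQ_meet_l lift_props by blast
  then have "parl L X (ln L I1 Q) = l"
    using lift_props assms O1_on_l l_in_L IQ_in_L by (metis lines_eqI parl_in_L parl_through)
  then show False
    using parl_par[OF IQ_in_L] I1_on_l Q_off Q_ne_I1
    by (metis ln_left ln_right ln_sym not_par_if_common_point)
qed

lemma lift_ne_O1: "X \<in> l \<Longrightarrow> X \<noteq> O1 \<Longrightarrow> lift L O1 I1 Q X \<noteq> O1"
  using lift_off_l O1_on_l by metis

lemma lift_eq_Q: "X \<in> l \<Longrightarrow> lift L O1 I1 Q X = Q \<Longrightarrow> X = I1"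
  by (metis IQ_in_L Q_ne_I1 common_point_unique l_in_L lift_props ln_left ln_right parl_self
      parl_through parl_through_other ln_sym I1_on_l Q_off)

lemma par_ln_lift:
  "X \<in> l \<Longrightarrow> X \<noteq> O1 \<Longrightarrow> par (ln L X (lift L O1 I1 Q X)) (ln L I1 Q)"
  using in_parl_iff[OF IQ_in_L] lift_props lift_off_l by metis

lemma mul_via_props:
  "Y \<in> l \<Longrightarrow> mul_via L O1 I1 Q X Y \<in> l \<and>
     mul_via L O1 I1 Q X Y \<in> parl L (lift L O1 I1 Q X) (ln L Y Q)"
  unfolding mul_via_def
  by (rule meet_props) (simp_all add: l_in_L YQ_in_L not_par_parl' not_par_ln_if_off Q_off)

lemma mul_via_unique:
  "Y \<in> l \<Longrightarrow> C \<in> l \<Longrightarrow> C \<in> parl L (lift L O1 I1 Q X) (ln L Y Q) \<Longrightarrow> mul_via L O1 I1 Q X Y = C"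
  unfolding mul_via_def
  by (rule meet_unique) (simp_all add: l_in_L YQ_in_L not_par_parl' not_par_ln_if_off Q_off)

lemma mul_via_zero_left: "Y \<in> l \<Longrightarrow> mul_via L O1 I1 Q O1 Y = O1"
  by (rule mul_via_unique) (simp_all add: lift_zero O1_on_l YQ_in_L)

lemma mul_via_zero_right: "mul_via L O1 I1 Q X O1 = O1"
proof (rule mul_via_unique)
  have "parl L (lift L O1 I1 Q X) (ln L O1 Q) = ln L O1 Q"
    using lift_props OQ_in_L parl_self by blast
  then show "O1 \<in> parl L (lift L O1 I1 Q X) (ln L O1 Q)"
    using Q_ne_O1 by simp
qed (simp_all add: O1_on_l)

lemma mul_via_one_left: "Y \<in> l \<Longrightarrow> mul_via L O1 I1 Q I1 Y = Y"
  by (rule mul_via_unique) (simp_all add: lift_one on_l_ne_Q parl_self)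

lemma mul_via_one_right: "X \<in> l \<Longrightarrow> mul_via L O1 I1 Q X I1 = X"
proof (rule mul_via_unique)
  have "parl L (lift L O1 I1 Q X) (ln L I1 Q) = parl L X (ln L I1 Q)"
    using lift_props IQ_in_L parl_through_other by blast
  then show "X \<in> parl L (lift L O1 I1 Q X) (ln L I1 Q)" using IQ_in_L by simp
qed (simp_all add: I1_on_l)

lemma mul_via_ne_right:
  assumes "X \<in> l" "X \<noteq> I1" "Y \<in> l" "Y \<noteq> O1" shows "mul_via L O1 I1 Q X Y \<noteq> Y"
proof
  assume "mul_via L O1 I1 Q X Y = Y"
  then have "lift L O1 I1 Q X \<in> ln L Y Q"
    using mul_via_props[OF assms(3), of X] YQ_in_L[OF assms(3)] on_l_ne_Q[OF assms(3)]
    by (metis ln_left parl_self parl_through parl_through_other)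
  moreover have "ln L Y Q \<noteq> ln L O1 Q"
    using OQ_meet_l[OF assms(3)] assms(4) on_l_ne_Q[OF assms(3)] by (metis ln_left)
  ultimately have "lift L O1 I1 Q X = Q"
    using common_point_unique[OF YQ_in_L[OF assms(3)] OQ_in_L] lift_props on_l_ne_Q[OF assms(3)]
      Q_ne_O1 by (metis ln_right)
  then show False using lift_eq_Q assms(1,2) by blast
qed

lemma par_ln_lifts:
  assumes Q': "Q' \<notin> l" "Q' \<notin> ln L O1 Q" and X: "X \<in> l" "X \<noteq> O1" "X \<noteq> I1"
  shows "par (ln L Q Q') (ln L (lift L O1 I1 Q X) (lift L O1 I1 Q' X))"
proof -
  interpret Q': mul_frame L O1 I1 Q'
    using Q'(1) by unfold_locales
  have lines: "ln L O1 Q \<noteq> l" "l \<noteq> ln L O1 Q'" "ln L O1 Q \<noteq> ln L O1 Q'"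
    using Q_off Q' Q_ne_O1 Q'.Q_ne_O1 by (metis ln_right)+
  define P1 where "P1 = lift L O1 I1 Q X"
  define P2 where "P2 = lift L O1 I1 Q' X"
  have P1: "P1 \<in> ln L O1 Q" "P1 \<noteq> O1" "Q \<noteq> P1"
    using lift_props lift_ne_O1[OF X(1,2)] lift_eq_Q[OF X(1)] X(3) by (auto simp: P1_def)
  have P2: "P2 \<in> ln L O1 Q'" "P2 \<noteq> O1" "Q' \<noteq> P2"
    using Q'.lift_props Q'.lift_ne_O1[OF X(1,2)] Q'.lift_eq_Q[OF X(1)] X(3) by (auto simp: P2_def)
  have "par (ln L Q Q') (ln L P1 P2)"
  proof (rule desargues_central[OF OQ_in_L l_in_L Q'.OQ_in_L lines])
    show "par (ln L Q I1) (ln L P1 X)" and "par (ln L I1 Q') (ln L X P2)"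
      using par_ln_lift[OF X(1,2)] Q'.par_ln_lift[OF X(1,2)]
      by (simp_all add: P1_def P2_def ln_sym par_sym)
  qed (use P1 P2 X O1_ne_I1 Q_ne_O1 Q'.Q_ne_O1 in simp_all)
  then show ?thesis by (simp add: P1_def P2_def)
qed

lemma mul_via_indep_off_OQ:
  assumes Q': "Q' \<notin> l" "Q' \<notin> ln L O1 Q" and X: "X \<in> l" and Y: "Y \<in> l"
  shows "mul_via L O1 I1 Q X Y = mul_via L O1 I1 Q' X Y"
proof -
  interpret Q': mul_frame L O1 I1 Q'
    using Q'(1) by unfold_locales
  consider "Y = O1" | "X = O1" | "X = I1" | "X \<noteq> O1" "X \<noteq> I1" "Y \<noteq> O1" by blast
  then show ?thesis
  proof cases
    case 4
    define P1 where "P1 = lift L O1 I1 Q X"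
    define P2 where "P2 = lift L O1 I1 Q' X"
    define C where "C = mul_via L O1 I1 Q X Y"
    have lines: "l \<noteq> ln L O1 Q" "ln L O1 Q \<noteq> ln L O1 Q'" "l \<noteq> ln L O1 Q'"
      using Q_off Q' Q_ne_O1 Q'.Q_ne_O1 by (metis ln_right)+
    have P1: "P1 \<in> ln L O1 Q" "P1 \<noteq> O1" "P1 \<noteq> Q" "P1 \<notin> l"
      using lift_props lift_off_l[OF X 4(1)] lift_ne_O1[OF X 4(1)] lift_eq_Q[OF X] 4(2)
      by (auto simp: P1_def)
    have P2: "P2 \<in> ln L O1 Q'" "P2 \<noteq> O1" "P2 \<noteq> Q'" "P2 \<notin> l"
      using Q'.lift_props Q'.lift_off_l[OF X 4(1)] Q'.lift_ne_O1[OF X 4(1)] Q'.lift_eq_Q[OF X] 4(2)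
      by (auto simp: P2_def)
    have C: "C \<in> l" "C \<in> parl L P1 (ln L Y Q)"
      using mul_via_props[OF Y] by (simp_all add: C_def P1_def)
    have "Y \<noteq> C" using mul_via_ne_right[OF X 4(2) Y 4(3)] by (simp add: C_def)
    have "par (ln L Y Q') (ln L C P2)"
    proof (rule desargues_central[OF l_in_L OQ_in_L Q'.OQ_in_L lines])
      show "par (ln L Y Q) (ln L C P1)"
        using in_parl_iff[OF YQ_in_L[OF Y]] C P1(4) by (metis ln_sym par_sym)
      show "par (ln L Q Q') (ln L P1 P2)"
        using par_ln_lifts[OF Q' X 4(1,2)] by (simp add: P1_def P2_def)
    qed (use P1 P2 C Y \<open>Y \<noteq> C\<close> O1_ne_I1 Q_ne_O1 Q'.Q_ne_O1 in auto)
    then have "C \<in> parl L P2 (ln L Y Q')"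
      using in_parl_iff[OF Q'.YQ_in_L[OF Y]] P2 C(1) Q'.on_l_ne_Q[OF Y] Q'(1)
      by (metis ln_sym par_sym)
    then show ?thesis
      using Q'.mul_via_unique[OF Y C(1)] by (simp add: C_def P2_def)
  qed (simp_all add: mul_via_zero_right Q'.mul_via_zero_right mul_via_zero_left[OF Y]
         Q'.mul_via_zero_left[OF Y] mul_via_one_left[OF Y] Q'.mul_via_one_left[OF Y])
qed

lemma mul_via_indep:
  assumes Q': "Q' \<notin> l" and X: "X \<in> l" and Y: "Y \<in> l"
  shows "mul_via L O1 I1 Q X Y = mul_via L O1 I1 Q' X Y"
proof (cases "Q' \<in> ln L O1 Q")
  case False
  then show ?thesis using mul_via_indep_off_OQ Q' X Y by blast
next
  case True
  have "\<not> par l (ln L O1 Q)"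
    using Q_off Q_ne_O1 O1_on_l by (metis ln_left ln_right not_par_if_common_point)
  then obtain R where R: "R \<notin> l" "R \<notin> ln L O1 Q"
    using point_off_two_lines[OF l_in_L OQ_in_L _ I1_on_l I1_off_OQ _ Q_off] Q_ne_O1
    by (metis ln_right)
  interpret R: mul_frame L O1 I1 R
    using R(1) by unfold_locales
  have "Q' \<notin> ln L O1 R"
  proof
    assume "Q' \<in> ln L O1 R"
    moreover have "ln L O1 R \<noteq> ln L O1 Q" using R(2) R.Q_ne_O1 by (metis ln_right)
    ultimately show False
      using common_point_unique[OF R.OQ_in_L OQ_in_L] True Q' O1_on_l R.Q_ne_O1 Q_ne_O1
      by (metis ln_left)
  qed
  then show ?thesis
    using mul_via_indep_off_OQ[OF R X Y] R.mul_via_indep_off_OQ[OF Q' _ X Y] by simp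
qed

lemma mul_line_eq_mul_via: "X \<in> l \<Longrightarrow> Y \<in> l \<Longrightarrow> mul_line L O1 I1 X Y = mul_via L O1 I1 Q X Y"
  using mul_via_indep someI[of "\<lambda>Q. Q \<notin> l", OF Q_off] by (simp add: mul_line_eq_mul_via_some)

end

context coordinate_line
begin

lemma mul_frame_exists:
  obtains Q where "mul_frame L O1 I1 Q"
  using point_off_line[OF l_in_L] mul_frame_axioms_def mul_frame_def coordinate_line_axioms by metis

lemma mul_line_in_l: "X \<in> l \<Longrightarrow> Y \<in> l \<Longrightarrow> mul_line L O1 I1 X Y \<in> l"
proof -
  assume "X \<in> l" "Y \<in> l"
  obtain Q where "mul_frame L O1 I1 Q" by (rule mul_frame_exists)
  then interpret mul_frame L O1 I1 Q .
  show ?thesis using mul_line_eq_mul_via mul_via_props \<open>X \<in> l\<close> \<open>Y \<in> l\<close> by simp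
qed

lemma
  assumes "X \<in> l"
  shows mul_line_zero_left: "mul_line L O1 I1 O1 X = O1"
    and mul_line_zero_right: "mul_line L O1 I1 X O1 = O1"
    and mul_line_one_right: "mul_line L O1 I1 X I1 = X"
proof -
  obtain Q where "mul_frame L O1 I1 Q" by (rule mul_frame_exists)
  then interpret mul_frame L O1 I1 Q .
  show "mul_line L O1 I1 O1 X = O1" "mul_line L O1 I1 X O1 = O1" "mul_line L O1 I1 X I1 = X"
    using assms mul_line_eq_mul_via mul_via_zero_left mul_via_zero_right mul_via_one_right
      O1_on_l I1_on_l by simp_all
qed

lemma mul_line_left_cancel:
  assumes X: "X \<in> l" "X \<noteq> O1" and YZ: "Y \<in> l" "Z \<in> l"
    and eq: "mul_line L O1 I1 X Y = mul_line L O1 I1 X Z"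
  shows "Y = Z"
proof -
  obtain Q where "mul_frame L O1 I1 Q" by (rule mul_frame_exists)
  then interpret mul_frame L O1 I1 Q .
  define P where "P = lift L O1 I1 Q X"
  define C where "C = mul_via L O1 I1 Q X Y"
  have "C = mul_via L O1 I1 Q X Z"
    using eq mul_line_eq_mul_via X YZ by (simp add: C_def)
  then have "C \<in> l" "C \<in> parl L P (ln L Y Q)" "C \<in> parl L P (ln L Z Q)"
    using mul_via_props[OF YZ(1), of X] mul_via_props[OF YZ(2), of X] by (simp_all add: C_def P_def)
  moreover have "P \<notin> l" using lift_off_l[OF X] by (simp add: P_def)
  ultimately have "parl L P (ln L Y Q) = parl L P (ln L Z Q)"
    using lines_eqI[OF parl_in_L parl_in_L] YQ_in_L YZ parl_through by metis
  then have "par (ln L Y Q) (ln L Z Q)"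
    using par_trans[OF YQ_in_L[OF YZ(1)] parl_in_L[OF YQ_in_L[OF YZ(1)]] YQ_in_L[OF YZ(2)]]
      parl_par YQ_in_L YZ par_sym by metis
  then have "ln L Y Q = ln L Z Q"
    using on_l_ne_Q YZ by (metis ln_right par_def disjoint_iff)
  then show ?thesis
    using common_point_unique[OF YQ_in_L[OF YZ(2)] l_in_L ln_ne_if_off[OF l_in_L YZ(2) Q_off]]
      YZ on_l_ne_Q by (metis ln_left)
qed

lemma mul_line_ne_zero:
  "X \<in> l \<Longrightarrow> X \<noteq> O1 \<Longrightarrow> Y \<in> l \<Longrightarrow> Y \<noteq> O1 \<Longrightarrow> mul_line L O1 I1 X Y \<noteq> O1"
  using mul_line_left_cancel mul_line_zero_right O1_on_l by metis

lemma mul_line_eq_left: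
  "X \<in> l \<Longrightarrow> X \<noteq> O1 \<Longrightarrow> Y \<in> l \<Longrightarrow> mul_line L O1 I1 X Y = X \<Longrightarrow> Y = I1"
  using mul_line_left_cancel mul_line_one_right I1_on_l by metis

lemma mul_line_inverse_exists:
  assumes B: "B \<in> l" "B \<noteq> O1"
  shows "\<exists>Y\<in>l. mul_line L O1 I1 B Y = I1 \<and> mul_line L O1 I1 Y B = I1"
proof -
  obtain Q where "mul_frame L O1 I1 Q" by (rule mul_frame_exists)
  then interpret Q: mul_frame L O1 I1 Q .
  define P where "P = lift L O1 I1 Q B"
  have P: "P \<notin> l" "P \<noteq> O1" "P \<in> ln L O1 Q" "P \<in> parl L B (ln L I1 Q)"
    using Q.lift_off_l[OF B] Q.lift_ne_O1[OF B] Q.lift_props by (simp_all add: P_def)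
  interpret P: mul_frame L O1 I1 P
    using P(1) by unfold_locales
  txt \<open>Choosing \<open>Y\<close> with \<open>Y Q\<close> parallel to \<open>P I1\<close> gives \<open>B Y = I1\<close> for the auxiliary
    point \<open>Q\<close>; the lift of \<open>Y\<close> for the auxiliary point \<open>P\<close> is then \<open>Q\<close>, which gives
    \<open>Y B = I1\<close> for the auxiliary point \<open>P\<close>.\<close>
  define k where "k = ln L P I1"
  have k: "k \<in> L" "P \<in> k" "I1 \<in> k" "\<not> par l k"
    using P.Q_ne_I1 not_par_ln_if_off[OF l_in_L I1_on_l P(1)] by (simp_all add: k_def ln_sym)
  define Y where "Y = meet l (parl L Q k)"
  have Y: "Y \<in> l" "Y \<in> parl L Q k"
    using meet_props[OF l_in_L parl_in_L[OF k(1)] not_par_parl'[OF l_in_L k(1,4)]]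
    by (simp_all add: Y_def)
  have "mul_via L O1 I1 Q B Y = I1"
  proof (rule Q.mul_via_unique[OF Y(1) I1_on_l])
    have "ln L Y Q = parl L Q k"
      using ln_eq_parl[OF k(1) Y(2)] Q.on_l_ne_Q[OF Y(1)] by (simp add: ln_sym)
    then show "I1 \<in> parl L (lift L O1 I1 Q B) (ln L Y Q)"
      using k parl_parl parl_self by (simp add: P_def[symmetric])
  qed
  moreover have "lift L O1 I1 P Y = Q"
  proof (rule P.lift_unique)
    show "Q \<in> parl L Y (ln L I1 P)"
      using parl_through_other[OF k(1) Y(2)] k(1) by (simp add: k_def ln_sym)
    show "Q \<in> ln L O1 P"
      using ln_unique[OF Q.OQ_in_L _ P(3) P.Q_ne_O1[symmetric]] Q.Q_ne_O1 by simp
  qed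
  then have "mul_via L O1 I1 P Y B = I1"
  proof (intro P.mul_via_unique[OF B(1) I1_on_l])
    assume "lift L O1 I1 P Y = Q"
    have "ln L B P = parl L B (ln L I1 Q)"
      using ln_eq_parl[OF Q.IQ_in_L P(4)] P(1) B(1) by metis
    then show "I1 \<in> parl L (lift L O1 I1 P Y) (ln L B P)"
      using \<open>lift L O1 I1 P Y = Q\<close> Q.IQ_in_L Q.Q_ne_I1 by (simp add: parl_parl parl_self)
  qed
  ultimately show ?thesis
    using Q.mul_line_eq_mul_via P.mul_line_eq_mul_via Y(1) B(1) by metis
qed

lemma inv_line_eq:
  assumes "B \<in> l" "B \<noteq> O1" "Y \<in> l" "mul_line L O1 I1 B Y = I1" "mul_line L O1 I1 Y B = I1"
  shows "inv_line L O1 I1 B = Y"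
  unfolding inv_line_def
  by (rule the_equality) (use assms mul_line_left_cancel in metis)+

end

section \<open>Parallel projections and translations\<close>

definition par_proj :: "'p set set \<Rightarrow> 'p set \<Rightarrow> 'p set \<Rightarrow> 'p \<Rightarrow> 'p" where
  "par_proj L D m X = meet m (parl L X D)"

text \<open>For \<open>Z\<close> off the line \<open>U V\<close>, \<open>translate L U V Z\<close> completes \<open>U, V, Z\<close> to a
  parallelogram, i.e. it is the image of \<open>Z\<close> under the translation taking \<open>U\<close> to \<open>V\<close>.\<close>

definition translate :: "'p set set \<Rightarrow> 'p \<Rightarrow> 'p \<Rightarrow> 'p \<Rightarrow> 'p" where
  "translate L U V Z = meet (parl L Z (ln L U V)) (parl L V (ln L U Z))"

context desarguesian_plane
begin

context
  fixes D m :: "'p set" assumes D_in_L: "D \<in> L" and m_in_L: "m \<in> L" and D_not_par_m: "\<not> par D m"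
begin

lemma m_not_par_parl: "\<not> par m (parl L X D)"
  using not_par_parl'[OF m_in_L D_in_L] D_not_par_m par_sym by blast

lemma par_proj_props: "par_proj L D m X \<in> m \<and> par_proj L D m X \<in> parl L X D"
  unfolding par_proj_def by (rule meet_props) (simp_all add: m_in_L D_in_L m_not_par_parl)

lemma par_proj_unique: "Z \<in> m \<Longrightarrow> Z \<in> parl L X D \<Longrightarrow> par_proj L D m X = Z"
  unfolding par_proj_def by (rule meet_unique) (simp_all add: m_in_L D_in_L m_not_par_parl)

lemma parl_par_proj: "parl L (par_proj L D m X) D = parl L X D"
  using parl_through_other[OF D_in_L] par_proj_props by blast

lemma ln_par_proj: "par_proj L D m X \<noteq> X \<Longrightarrow> ln L X (par_proj L D m X) = parl L X D"
  using ln_eq_parl[OF D_in_L] par_proj_props by metis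

lemma par_proj_fixed: "X \<in> m \<Longrightarrow> par_proj L D m X = X"
  using par_proj_unique D_in_L by simp

end

lemma parl_ne_parl:
  "l \<in> L \<Longrightarrow> D \<in> L \<Longrightarrow> \<not> par D l \<Longrightarrow> A \<in> l \<Longrightarrow> B \<in> l \<Longrightarrow> A \<noteq> B \<Longrightarrow> parl L A D \<noteq> parl L B D"
  by (metis lines_eqI parl_in_L parl_par parl_through par_sym)

context
  fixes U V :: 'p assumes U_ne_V: "U \<noteq> V"
begin

lemma UV_in_L: "ln L U V \<in> L"
  using U_ne_V by simp

lemma V_off: "Z \<notin> ln L U V \<Longrightarrow> V \<notin> ln L U Z"
  by (metis U_ne_V UV_in_L ln_in_L ln_left ln_right ln_unique)

lemma UZ_props: "Z \<notin> ln L U V \<Longrightarrow> ln L U Z \<in> L \<and> \<not> par (ln L U V) (ln L U Z)"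
  using U_ne_V by (metis ln_in_L ln_left ln_right not_par_if_common_point)

lemma translate_props:
  assumes "Z \<notin> ln L U V"
  shows "translate L U V Z \<in> parl L Z (ln L U V) \<and> translate L U V Z \<in> parl L V (ln L U Z)"
proof -
  from UZ_props[OF assms(1)] show ?thesis
    unfolding translate_def
    by (intro meet_props not_par_parl not_par_parl' parl_in_L UV_in_L) blast+
qed

lemma translate_unique:
  assumes "Z \<notin> ln L U V" "W \<in> parl L Z (ln L U V)" "W \<in> parl L V (ln L U Z)"
  shows "translate L U V Z = W"
proof -
  from UZ_props[OF assms(1)] show ?thesis
    unfolding translate_def
    by (intro meet_unique not_par_parl not_par_parl' parl_in_L UV_in_L assms(2,3)) blast+
qed

lemma translate_ne:
  assumes "Z \<notin> ln L U V" shows "translate L U V Z \<noteq> Z" "translate L U V Z \<noteq> V"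
proof -
  have UZ: "ln L U Z \<in> L" and "Z \<noteq> U" using assms U_ne_V by (metis ln_in_L ln_left)+
  have "parl L V (ln L U Z) \<inter> ln L U Z = {}"
    using parl_disjoint[OF UZ V_off[OF assms]] .
  then show "translate L U V Z \<noteq> Z"
    using translate_props[OF assms] \<open>Z \<noteq> U\<close> by (metis disjoint_iff ln_right)
  have "parl L Z (ln L U V) \<inter> ln L U V = {}"
    using parl_disjoint[OF UV_in_L assms] .
  then show "translate L U V Z \<noteq> V"
    using translate_props[OF assms] U_ne_V by (metis disjoint_iff ln_right)
qed

lemma translate_par:
  assumes Z: "Z \<notin> ln L U V" and W: "W \<notin> ln L U V" "W \<notin> parl L Z (ln L U V)"
  shows "par (ln L Z W) (ln L (translate L U V Z) (translate L U V W))"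
proof -
  let ?t = "ln L U V"
  have lines: "parl L Z ?t \<noteq> ?t" "?t \<noteq> parl L W ?t" "parl L Z ?t \<noteq> parl L W ?t"
    using Z W UV_in_L by (metis parl_through parl_through_other)+
  show ?thesis
  proof (rule desargues_parallel[OF parl_in_L[OF UV_in_L] UV_in_L parl_in_L[OF UV_in_L] lines
        parl_par[OF UV_in_L] par_sym[OF parl_par[OF UV_in_L]]])
    show "par (ln L Z U) (ln L (translate L U V Z) V)" "par (ln L U W) (ln L V (translate L U V W))"
      using translate_props Z W translate_ne V_off in_parl_iff
      by (metis ln_in_L ln_left ln_sym par_sym UV_in_L U_ne_V)+
  qed (use translate_props Z W translate_ne(1)[OF Z, symmetric] translate_ne(1)[OF W(1), symmetric]
         U_ne_V in auto)
qed

end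

lemma par_proj_par_proj:
  assumes "D \<in> L" "m \<in> L" "n \<in> L" "\<not> par D m" "\<not> par D n"
  shows "par_proj L D n (par_proj L D m X) = par_proj L D n X"
  using par_proj_unique[OF assms(1,3,5)] par_proj_props[OF assms(1,3,5)]
    parl_par_proj[OF assms(1,2,4)] by metis

end

section \<open>Parallel projections preserve multiplication\<close>

locale projection_frame = coordinate_line L O1 I1 for L :: "'p set set" and O1 I1 +
  fixes D l2 :: "'p set"
  assumes D_in_L: "D \<in> L" and l2_in_L: "l2 \<in> L"
    and D_not_par_l: "\<not> par D (ln L O1 I1)" and D_not_par_l2: "\<not> par D l2"
begin

abbreviation (input) \<pi> where "\<pi> \<equiv> par_proj L D l2"

lemma proj_in_l2: "\<pi> X \<in> l2" and proj_in_parl: "\<pi> X \<in> parl L X D"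
  using par_proj_props[OF D_in_L l2_in_L D_not_par_l2] by auto

lemmas proj_unique = par_proj_unique[OF D_in_L l2_in_L D_not_par_l2]
  and parl_proj = parl_par_proj[OF D_in_L l2_in_L D_not_par_l2]
  and ln_proj = ln_par_proj[OF D_in_L l2_in_L D_not_par_l2]
  and proj_fixed = par_proj_fixed[OF D_in_L l2_in_L D_not_par_l2]

lemma parl_D_ne: "X \<in> l \<Longrightarrow> Y \<in> l \<Longrightarrow> X \<noteq> Y \<Longrightarrow> parl L X D \<noteq> parl L Y D"
  using parl_ne_parl[OF l_in_L D_in_L D_not_par_l] .

lemma proj_inj: "X \<in> l \<Longrightarrow> Y \<in> l \<Longrightarrow> \<pi> X = \<pi> Y \<Longrightarrow> X = Y"
  using parl_D_ne parl_proj by metis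

lemma image_coordinate_line: "coordinate_line L (\<pi> O1) (\<pi> I1)"
  using proj_inj O1_on_l I1_on_l O1_ne_I1 by unfold_locales blast

lemma image_line: "ln L (\<pi> O1) (\<pi> I1) = l2"
  using ln_unique[OF l2_in_L proj_in_l2 proj_in_l2] proj_inj O1_on_l I1_on_l O1_ne_I1 by blast

context
  assumes O1_on_l2: "O1 \<in> l2" and l2_ne_l: "l2 \<noteq> l"
begin

lemma l_meet_l2: "Z \<in> l \<Longrightarrow> Z \<in> l2 \<Longrightarrow> Z = O1"
  using common_point_unique[OF l_in_L l2_in_L l2_ne_l[symmetric]] O1_on_l O1_on_l2 by blast

lemma proj_off_l:
  assumes "Y \<in> l" "Y \<noteq> O1" shows "\<pi> Y \<notin> l"
proof
  assume "\<pi> Y \<in> l"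
  then have "\<pi> Y = \<pi> O1" using l_meet_l2[OF _ proj_in_l2] proj_fixed[OF O1_on_l2] by simp
  then show False using proj_inj[OF assms(1) O1_on_l] assms(2) by simp
qed

lemma I1_off_l2: "I1 \<notin> l2"
  using l_meet_l2 I1_on_l O1_ne_I1 by blast

lemma I1_frame: "mul_frame L O1 (\<pi> I1) I1"
  using I1_off_l2 image_line image_coordinate_line proj_fixed[OF O1_on_l2]
  by (simp add: mul_frame_def mul_frame_axioms_def)

lemma par_proj_mul_via_through_origin:
  assumes X: "X \<in> l" and Y: "Y \<in> l" "Y \<noteq> O1"
  shows "\<pi> (mul_via L O1 I1 (\<pi> Y) X Y) = mul_via L O1 (\<pi> I1) I1 (\<pi> X) (\<pi> Y)"
proof -
  have l2_eq: "ln L O1 (\<pi> I1) = l2" using image_line proj_fixed[OF O1_on_l2] by simp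
  interpret frame2: mul_frame L O1 "\<pi> I1" I1 by (rule I1_frame)
  interpret frame1: mul_frame L O1 I1 "\<pi> Y"
    using proj_off_l[OF Y] by unfold_locales
  have "lift L O1 (\<pi> I1) I1 (\<pi> X) = X"
  proof (rule frame2.lift_unique)
    have "ln L (\<pi> I1) I1 = parl L I1 D"
      using ln_proj I1_off_l2 proj_in_l2 by (metis ln_sym)
    then show "X \<in> parl L (\<pi> X) (ln L (\<pi> I1) I1)"
      using parl_parl[OF D_in_L] parl_proj D_in_L by simp
  qed (fact X)
  moreover define C' where "C' = mul_via L O1 (\<pi> I1) I1 (\<pi> X) (\<pi> Y)"
  ultimately have C': "C' \<in> l2" "C' \<in> parl L X (ln L (\<pi> Y) I1)"
    using frame2.mul_via_props[of "\<pi> Y" "\<pi> X"] proj_in_l2 l2_eq by (simp_all add: C'_def)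
  have "lift L O1 I1 (\<pi> Y) X = C'"
  proof (rule frame1.lift_unique)
    show "C' \<in> parl L X (ln L I1 (\<pi> Y))" using C' by (simp add: ln_sym)
    show "C' \<in> ln L O1 (\<pi> Y)"
      using C' ln_unique[OF l2_in_L O1_on_l2 proj_in_l2] proj_off_l[OF Y] O1_on_l by metis
  qed
  moreover define C where "C = mul_via L O1 I1 (\<pi> Y) X Y"
  ultimately have C: "C \<in> l" "C \<in> parl L C' (ln L Y (\<pi> Y))"
    using frame1.mul_via_props[OF Y(1), of X] by (simp_all add: C_def)
  have "ln L Y (\<pi> Y) = parl L Y D"
    using ln_proj proj_off_l[OF Y] Y(1) by metis
  then have "C' \<in> parl L C D"
    using C(2) parl_parl[OF D_in_L] parl_through_other[OF D_in_L] by (metis parl_through D_in_L)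
  then have "\<pi> C = C'" using proj_unique C'(1) by simp
  then show ?thesis by (simp add: C_def C'_def)
qed

lemma par_proj_mul_through_origin:
  assumes X: "X \<in> l" and Y: "Y \<in> l"
  shows "\<pi> (mul_line L O1 I1 X Y) = mul_line L (\<pi> O1) (\<pi> I1) (\<pi> X) (\<pi> Y)"
proof -
  interpret image: coordinate_line L O1 "\<pi> I1"
    using image_coordinate_line proj_fixed[OF O1_on_l2] by simp
  have on_image: "\<pi> Z \<in> image.l" for Z using proj_in_l2 image_line proj_fixed[OF O1_on_l2] by simp
  show ?thesis
  proof (cases "Y = O1")
    case True
    then show ?thesis
      using mul_line_zero_right[OF X] image.mul_line_zero_right on_image proj_fixed[OF O1_on_l2]
      by simp
  next
    case False
    interpret frame1: mul_frame L O1 I1 "\<pi> Y"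
      using proj_off_l[OF Y False] by unfold_locales
    interpret frame2: mul_frame L O1 "\<pi> I1" I1 by (rule I1_frame)
    show ?thesis
      using par_proj_mul_via_through_origin[OF X Y False] frame1.mul_line_eq_mul_via[OF X Y]
        frame2.mul_line_eq_mul_via[OF on_image on_image] proj_fixed[OF O1_on_l2] by simp
  qed
qed

end

context
  assumes disjoint: "l2 \<inter> l = {}"
begin

lemma proj_ne: "\<pi> Z \<noteq> Z" if "Z \<in> l"
  using disjoint proj_in_l2[of Z] that by auto

lemma O1_ne_proj_O1: "O1 \<noteq> \<pi> O1"
  using proj_ne O1_on_l by metis

lemma ln_O1_proj_O1: "ln L O1 (\<pi> O1) = parl L O1 D"
  using ln_proj proj_ne O1_on_l by metis

lemma off_translation_line:
  "W \<in> parl L Z D \<Longrightarrow> Z \<in> l \<Longrightarrow> Z \<noteq> O1 \<Longrightarrow> W \<notin> ln L O1 (\<pi> O1)"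
  using ln_O1_proj_O1 parl_D_ne[OF _ O1_on_l] parl_through_other[OF D_in_L] by metis

lemma proj_I1_off_translation_line: "\<pi> I1 \<notin> ln L O1 (\<pi> O1)"
  using off_translation_line proj_in_parl I1_on_l O1_ne_I1 by metis

lemma parl_translation_line: "parl L Z (ln L O1 (\<pi> O1)) = parl L Z D"
  using ln_O1_proj_O1 parl_parl[OF D_in_L] by simp

lemma proj_eq_translate:
  assumes "Z \<in> l" "Z \<noteq> O1" shows "\<pi> Z = translate L O1 (\<pi> O1) Z"
proof (rule translate_unique[symmetric])
  show "O1 \<noteq> \<pi> O1" by (rule O1_ne_proj_O1)
  show "Z \<notin> ln L O1 (\<pi> O1)" using off_translation_line[OF parl_through[OF D_in_L] assms] .
  show "\<pi> Z \<in> parl L Z (ln L O1 (\<pi> O1))" using proj_in_parl parl_translation_line by simp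
  have "par l2 l" using disjoint by (simp add: par_def)
  then have "parl L (\<pi> O1) (ln L O1 Z) = l2"
    using ln_unique[OF l_in_L O1_on_l assms(1) assms(2)[symmetric]] parl_unique[OF l_in_L l2_in_L]
      proj_in_l2 by simp
  then show "\<pi> Z \<in> parl L (\<pi> O1) (ln L O1 Z)" using proj_in_l2 by simp
qed

lemma proj_I1_frame: "mul_frame L O1 I1 (\<pi> I1)"
  using disjoint proj_in_l2[of I1] I1_on_l by unfold_locales blast

lemma translated_frame: "mul_frame L (\<pi> O1) (\<pi> I1) (translate L O1 (\<pi> O1) (\<pi> I1))"
proof -
  interpret image: coordinate_line L "\<pi> O1" "\<pi> I1" by (rule image_coordinate_line)
  have "translate L O1 (\<pi> O1) (\<pi> I1) \<in> parl L I1 D"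
    using translate_props[OF O1_ne_proj_O1 proj_I1_off_translation_line] parl_translation_line
      parl_proj by simp
  moreover have "translate L O1 (\<pi> O1) (\<pi> I1) \<noteq> \<pi> I1"
    using translate_ne[OF O1_ne_proj_O1 proj_I1_off_translation_line] by simp
  ultimately have "translate L O1 (\<pi> O1) (\<pi> I1) \<notin> l2"
    using proj_unique by metis
  then show ?thesis
    using image_line by unfold_locales simp
qed

lemma translate_lift:
  assumes X: "X \<in> l" "X \<noteq> O1"
  shows "lift L (\<pi> O1) (\<pi> I1) (translate L O1 (\<pi> O1) (\<pi> I1)) (\<pi> X) =
    translate L O1 (\<pi> O1) (lift L O1 I1 (\<pi> I1) X)"
proof -
  define \<tau> where "\<tau> = translate L O1 (\<pi> O1)"
  interpret frame1: mul_frame L O1 I1 "\<pi> I1" by (rule proj_I1_frame)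
  interpret frame2: mul_frame L "\<pi> O1" "\<pi> I1" "\<tau> (\<pi> I1)"
    using translated_frame by (simp add: \<tau>_def)
  define P where "P = lift L O1 I1 (\<pi> I1) X"
  have "ln L I1 (\<pi> I1) = parl L I1 D"
    using ln_proj proj_ne I1_on_l by metis
  then have P: "P \<in> parl L X D" "P \<in> ln L O1 (\<pi> I1)" "P \<noteq> O1"
    using frame1.lift_props frame1.lift_ne_O1[OF X] parl_parl[OF D_in_L] by (simp_all add: P_def)
  have P_off: "P \<notin> ln L O1 (\<pi> O1)"
    using off_translation_line P(1) X by metis
  show ?thesis
    unfolding \<tau>_def[symmetric] P_def[symmetric]
  proof (rule frame2.lift_unique)
    have "ln L (\<pi> I1) (\<tau> (\<pi> I1)) = parl L (\<pi> I1) D"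
      using translate_props[OF O1_ne_proj_O1 proj_I1_off_translation_line]
        translate_ne[OF O1_ne_proj_O1 proj_I1_off_translation_line]
        parl_translation_line ln_eq_parl[OF D_in_L] by (metis \<tau>_def)
    moreover have "\<tau> P \<in> parl L X D"
      using translate_props[OF O1_ne_proj_O1 P_off] parl_translation_line
        parl_through_other[OF D_in_L P(1)] by (simp add: \<tau>_def)
    ultimately show "\<tau> P \<in> parl L (\<pi> X) (ln L (\<pi> I1) (\<tau> (\<pi> I1)))"
      using parl_parl[OF D_in_L] parl_proj by simp
    have "ln L O1 P = ln L O1 (\<pi> I1)"
      using ln_unique[OF frame1.OQ_in_L] P(2,3) frame1.Q_ne_O1 by (metis ln_left)
    then have "\<tau> P \<in> parl L (\<pi> O1) (ln L O1 (\<pi> I1))"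
      using translate_props[OF O1_ne_proj_O1 P_off] by (simp add: \<tau>_def)
    moreover have "ln L (\<pi> O1) (\<tau> (\<pi> I1)) = parl L (\<pi> O1) (ln L O1 (\<pi> I1))"
      using translate_props[OF O1_ne_proj_O1 proj_I1_off_translation_line]
        translate_ne[OF O1_ne_proj_O1 proj_I1_off_translation_line]
        ln_eq_parl[OF frame1.OQ_in_L] by (metis \<tau>_def)
    ultimately show "\<tau> P \<in> ln L (\<pi> O1) (\<tau> (\<pi> I1))" by simp
  qed
qed

lemma translate_par_on_D_lines:
  assumes "Z \<in> parl L Z0 D" "W \<in> parl L W0 D" "Z0 \<in> l" "W0 \<in> l" "Z0 \<noteq> O1" "W0 \<noteq> O1" "Z0 \<noteq> W0"
  shows "par (ln L Z W) (ln L (translate L O1 (\<pi> O1) Z) (translate L O1 (\<pi> O1) W))"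
proof (rule translate_par[OF O1_ne_proj_O1])
  show "Z \<notin> ln L O1 (\<pi> O1)" "W \<notin> ln L O1 (\<pi> O1)"
    using off_translation_line assms by blast+
  show "W \<notin> parl L Z (ln L O1 (\<pi> O1))"
    using parl_translation_line parl_D_ne[OF assms(3,4,7)] parl_through_other[OF D_in_L] assms(1,2)
    by metis
qed

lemma par_proj_mul_via_parallel:
  assumes X: "X \<in> l" "X \<noteq> O1" and Y: "Y \<in> l" "Y \<noteq> O1" "Y \<noteq> I1"
  shows "\<pi> (mul_via L O1 I1 (\<pi> I1) X Y) =
    mul_via L (\<pi> O1) (\<pi> I1) (translate L O1 (\<pi> O1) (\<pi> I1)) (\<pi> X) (\<pi> Y)"
proof -
  interpret frame1: mul_frame L O1 I1 "\<pi> I1" by (rule proj_I1_frame)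
  define Q' where "Q' = translate L O1 (\<pi> O1) (\<pi> I1)"
  interpret frame2: mul_frame L "\<pi> O1" "\<pi> I1" Q'
    using translated_frame by (simp add: Q'_def)
  have on_image: "\<pi> Z \<in> ln L (\<pi> O1) (\<pi> I1)" for Z using proj_in_l2 image_line by simp
  define P where "P = lift L O1 I1 (\<pi> I1) X"
  define P' where "P' = lift L (\<pi> O1) (\<pi> I1) Q' (\<pi> X)"
  define C where "C = mul_via L O1 I1 (\<pi> I1) X Y"
  have C: "C \<in> l" "C \<in> parl L P (ln L Y (\<pi> I1))" "C \<noteq> O1" "C \<noteq> X"
    using frame1.mul_via_props[OF Y(1)] mul_line_ne_zero[OF X Y(1,2)]
      mul_line_eq_left[OF X Y(1)] Y(3) frame1.mul_line_eq_mul_via[OF X(1) Y(1)]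
    by (auto simp: C_def P_def)
  have "ln L I1 (\<pi> I1) = parl L I1 D"
    using ln_proj proj_ne I1_on_l by metis
  then have P: "P \<notin> l" "P \<in> parl L X D"
    using frame1.lift_off_l[OF X] frame1.lift_props parl_parl[OF D_in_L] by (simp_all add: P_def)
  have "C \<noteq> P" using C(1) P(1) by blast
  have "\<pi> C \<noteq> P'"
    using frame2.lift_off_l on_image proj_inj[OF X(1) O1_on_l] X(2) by (metis P'_def)
  have "par (ln L Y (\<pi> I1)) (ln L (\<pi> Y) Q')"
    using translate_par_on_D_lines[OF parl_through[OF D_in_L] proj_in_parl Y(1) I1_on_l Y(2)]
      O1_ne_I1 Y(3) proj_eq_translate[OF Y(1,2)] by (simp add: Q'_def)
  moreover have "par (ln L C P) (ln L (\<pi> C) P')"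
    using translate_par_on_D_lines[OF parl_through[OF D_in_L] P(2) C(1) X(1) C(3) X(2) C(4)]
      proj_eq_translate[OF C(1,3)] translate_lift[OF X] by (simp add: Q'_def P'_def P_def)
  moreover have "par (ln L C P) (ln L Y (\<pi> I1))"
    using in_parl_iff[OF frame1.YQ_in_L[OF Y(1)]] C(1,2) P(1) \<open>C \<noteq> P\<close> by (metis ln_sym)
  ultimately have "par (ln L P' (\<pi> C)) (ln L (\<pi> Y) Q')"
    using par_trans[OF _ _ frame1.YQ_in_L[OF Y(1)]] par_trans[OF _ frame1.YQ_in_L[OF Y(1)]]
      frame2.YQ_in_L[OF on_image] \<open>C \<noteq> P\<close> \<open>\<pi> C \<noteq> P'\<close> par_sym
    by (metis ln_in_L ln_sym)
  then have "mul_via L (\<pi> O1) (\<pi> I1) Q' (\<pi> X) (\<pi> Y) = \<pi> C"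
    using frame2.mul_via_unique[OF on_image on_image] in_parl_iff[OF frame2.YQ_in_L[OF on_image]]
      \<open>\<pi> C \<noteq> P'\<close> by (simp add: P'_def)
  then show ?thesis by (simp add: C_def Q'_def)
qed

lemma par_proj_mul_parallel:
  assumes X: "X \<in> l" and Y: "Y \<in> l"
  shows "\<pi> (mul_line L O1 I1 X Y) = mul_line L (\<pi> O1) (\<pi> I1) (\<pi> X) (\<pi> Y)"
proof -
  interpret image: coordinate_line L "\<pi> O1" "\<pi> I1" by (rule image_coordinate_line)
  have on_image: "\<pi> Z \<in> image.l" for Z using proj_in_l2 image_line by simp
  consider "Y = O1" | "X = O1" | "Y = I1" | "X \<noteq> O1" "Y \<noteq> O1" "Y \<noteq> I1" by blast
  then show ?thesis
  proof cases
    case 1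
    then show ?thesis using mul_line_zero_right[OF X] image.mul_line_zero_right on_image by simp
  next
    case 2
    then show ?thesis using mul_line_zero_left[OF Y] image.mul_line_zero_left on_image by simp
  next
    case 3
    then show ?thesis using mul_line_one_right[OF X] image.mul_line_one_right on_image by simp
  next
    case 4
    interpret frame1: mul_frame L O1 I1 "\<pi> I1" by (rule proj_I1_frame)
    interpret frame2: mul_frame L "\<pi> O1" "\<pi> I1" "translate L O1 (\<pi> O1) (\<pi> I1)"
      by (rule translated_frame)
    show ?thesis
      using par_proj_mul_via_parallel[OF X 4(1) Y 4(2,3)] frame1.mul_line_eq_mul_via[OF X Y]
        frame2.mul_line_eq_mul_via[OF on_image on_image] by simp
  qed
qed

end

lemma proj_O1_off_l: "O1 \<notin> l2 \<Longrightarrow> \<pi> O1 \<notin> l"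
  using proj_inj[OF _ O1_on_l] proj_fixed[OF proj_in_l2] proj_in_l2 by metis

lemma par_proj_mul_off_origin:
  assumes "O1 \<notin> l2" "l2 \<inter> l \<noteq> {}" and X: "X \<in> l" and Y: "Y \<in> l"
  shows "\<pi> (mul_line L O1 I1 X Y) = mul_line L (\<pi> O1) (\<pi> I1) (\<pi> X) (\<pi> Y)"
proof -
  define m where "m = parl L (\<pi> O1) l"
  have m: "m \<in> L" "\<pi> O1 \<in> m" "m \<inter> l = {}" "\<not> par D m"
    using parl_disjoint[OF l_in_L proj_O1_off_l[OF assms(1)]]
      not_par_parl'[OF D_in_L l_in_L D_not_par_l] l_in_L by (simp_all add: m_def)
  interpret to_m: projection_frame L O1 I1 D m
    using m D_in_L D_not_par_l by unfold_locales
  have m_O1: "par_proj L D m O1 = \<pi> O1"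
    using to_m.proj_unique m(2) proj_in_parl by blast
  interpret to_l2: projection_frame L "\<pi> O1" "par_proj L D m I1" D l2
    using to_m.image_coordinate_line m_O1 to_m.image_line m(4) l2_in_L D_not_par_l2 D_in_L
    by (simp add: projection_frame_def projection_frame_axioms_def)
  have "l2 \<noteq> m" using assms(2) m(3) by blast
  have comp: "\<pi> (par_proj L D m Z) = \<pi> Z" for Z
    using par_proj_par_proj[OF D_in_L m(1) l2_in_L m(4) D_not_par_l2] .
  have "\<pi> (mul_line L O1 I1 X Y) = \<pi> (par_proj L D m (mul_line L O1 I1 X Y))"
    by (simp add: comp)
  also have "\<dots> = \<pi> (mul_line L (\<pi> O1) (par_proj L D m I1) (par_proj L D m X) (par_proj L D m Y))"
    using to_m.par_proj_mul_parallel[OF m(3) X Y] m_O1 by simp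
  also have "\<dots> = mul_line L (\<pi> O1) (\<pi> I1) (\<pi> X) (\<pi> Y)"
    using to_l2.par_proj_mul_through_origin[OF proj_in_l2] \<open>l2 \<noteq> m\<close> to_m.image_line m_O1
      to_m.proj_in_l2 comp proj_fixed[OF proj_in_l2] by simp
  finally show ?thesis .
qed

lemma par_proj_mul:
  assumes X: "X \<in> l" and Y: "Y \<in> l"
  shows "\<pi> (mul_line L O1 I1 X Y) = mul_line L (\<pi> O1) (\<pi> I1) (\<pi> X) (\<pi> Y)"
proof -
  consider "l2 = l" | "l2 \<inter> l = {}" | "O1 \<in> l2" "l2 \<noteq> l" | "O1 \<notin> l2" "l2 \<inter> l \<noteq> {}"
    by blast
  then show ?thesis
  proof cases
    case 1
    then show ?thesis using proj_fixed mul_line_in_l X Y O1_on_l I1_on_l by simp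
  qed (use par_proj_mul_parallel par_proj_mul_through_origin par_proj_mul_off_origin X Y in blast)+
qed

lemma par_proj_ratio:
  assumes A: "A \<in> l" and B: "B \<in> l" "B \<noteq> O1"
  shows "\<pi> (ratio L O1 I1 A B) = ratio L (\<pi> O1) (\<pi> I1) (\<pi> A) (\<pi> B)"
proof -
  interpret image: coordinate_line L "\<pi> O1" "\<pi> I1" by (rule image_coordinate_line)
  have on_image: "\<pi> Z \<in> image.l" for Z using proj_in_l2 image_line by simp
  obtain Y where Y: "Y \<in> l" "mul_line L O1 I1 B Y = I1" "mul_line L O1 I1 Y B = I1"
    using mul_line_inverse_exists[OF B] by blast
  have "inv_line L O1 I1 B = Y" using inv_line_eq[OF B Y] .
  moreover have "inv_line L (\<pi> O1) (\<pi> I1) (\<pi> B) = \<pi> Y"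
    using image.inv_line_eq[OF on_image _ on_image] proj_inj[OF B(1) O1_on_l] B(2)
      par_proj_mul[OF B(1) Y(1)] par_proj_mul[OF Y(1) B(1)] Y(2,3) by metis
  ultimately show ?thesis
    using par_proj_mul[OF Y(1) A] by (simp add: ratio_def)
qed

end

lemma (in coordinate_line) ratio_in_l:
  assumes "A \<in> l" "B \<in> l" "B \<noteq> O1" shows "ratio L O1 I1 A B \<in> l"
  using mul_line_inverse_exists[OF assms(2,3)] inv_line_eq[OF assms(2,3)] mul_line_in_l assms(1)
  by (metis ratio_def)

lemma (in coordinate_line) parallel_projection_eq_par_proj:
  assumes "parallel_projection L l l2 P"
  obtains D where "projection_frame L O1 I1 D l2" and "\<And>A. A \<in> l \<Longrightarrow> P A = par_proj L D l2 A"
proof -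
  have l2: "l2 \<in> L" and P_in_l2: "\<And>A. A \<in> l \<Longrightarrow> P A \<in> l2"
    using assms bij_betw_apply unfolding parallel_projection_def by metis+
  from assms obtain D where D: "D \<in> L" "\<not> par D l"
    and dir: "\<And>A. A \<in> l \<Longrightarrow> P A \<noteq> A \<Longrightarrow> par (ln L A (P A)) D"
    unfolding parallel_projection_def by blast
  have P_in_parl: "P A \<in> parl L A D" if "A \<in> l" for A
  proof (cases "P A = A")
    case False
    then show ?thesis using dir[OF that] in_parl_iff[OF D(1)] by blast
  qed (simp add: D(1))
  have "\<not> par D l2"
  proof
    assume "par D l2"
    have "parl L A D = l2" if "A \<in> l" for A
    proof -
      have "parl L (P A) D = l2"
        using parl_unique[OF D(1) l2 P_in_l2[OF that] par_sym[OF \<open>par D l2\<close>]] .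
      then show ?thesis using parl_through_other[OF D(1) P_in_parl[OF that]] by simp
    qed
    then show False
      using parl_ne_parl[OF l_in_L D O1_on_l I1_on_l O1_ne_I1] O1_on_l I1_on_l by simp
  qed
  show ?thesis
  proof
    show "projection_frame L O1 I1 D l2"
      using D l2 \<open>\<not> par D l2\<close> by unfold_locales
    show "P A = par_proj L D l2 A" if "A \<in> l" for A
      using par_proj_unique[OF D(1) l2 \<open>\<not> par D l2\<close> P_in_l2[OF that] P_in_parl[OF that]] by simp
  qed
qed

theorem mainTheorem9:
  fixes L :: "'p set set" and O1 I1 :: 'p and l2 :: "'p set"
    and P :: "'p \<Rightarrow> 'p" and A B :: 'p
  assumes "desargues_affine_plane L"
    and "O1 \<noteq> I1"
    and "parallel_projection L (ln L O1 I1) l2 P"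
    and "A \<in> ln L O1 I1" and "B \<in> ln L O1 I1" and "B \<noteq> O1"
  shows "P (ratio L O1 I1 A B) = ratio L (P O1) (P I1) (P A) (P B)"
proof -
  interpret coordinate_line L O1 I1
    using assms(1,2) by unfold_locales
  obtain D where frame: "projection_frame L O1 I1 D l2"
    and P_eq: "\<And>X. X \<in> ln L O1 I1 \<Longrightarrow> P X = par_proj L D l2 X"
    using parallel_projection_eq_par_proj[OF assms(3)] by blast
  interpret projection_frame L O1 I1 D l2 by (fact frame)
  show ?thesis
    using par_proj_ratio[OF assms(4-6)] ratio_in_l[OF assms(4-6)] P_eq assms(4,5) O1_on_l I1_on_l
    by simp
qed

end
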